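(* Let $\phi:\mathbb{M}_n\to\mathbb{M}_m$ be a positive linear map, and let $\phi^*:\mathbb{M}_m\to\mathbb{M}_n$ denote its adjoint with respect to the Hilbert–Schmidt inner product $\langle A,B\rangle=\mathrm{Tr}[A^*B]$. Then $\phi$ is a generalized Schwarz map if and only if for every pair $(K,X)\in \mathbb{M}_m\times\mathbb{M}_m^+$ with $\ker(X)\subseteq\ker(K^* )$ we have \[ \mathrm{Tr}[\phi^*(K^*X^{+}K)] \geq \mathrm{Tr}[\phi^*(K)^*\phi^*(X)^{+}\phi^*(K)]. \]
   Context: $\mathbb{M}_n$ denotes the $n\times n$ complex matrices and $\mathbb{M}_n^+$ the positive semidefinite ones; $\mathbf{1}_n$ is the identity. For a matrix $Z$, $Z^+$ denotes its Moore–Penrose generalized inverse. A linear map $\phi:\mathbb{M}_n\to\mathbb{M}_m$ is called positive if it maps $\mathbb{M}_n^+$ into $\mathbb{M}_m^+$. A linear map $\phi:\mathbb{M}_n\to\mathbb{M}_m$ is called a generalized Schwarz map if for all $K\in\mathbb{M}_n$ the block matrix $\begin{pmatrix}\phi(\mathbf{1}_n) & \phi(K)\\ \phi(K)^* & \phi(K^*K)\end{pmatrix}$ is positive semidefinite. *)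

theory Defs
  imports "HOL-Analysis.Analysis" "HOL-Library.Complex_Order"
begin

definition cadj :: "complex^'c^'r \<Rightarrow> complex^'r^'c" where
  "cadj A = (\<chi> i j. cnj (A $ j $ i))"

definition cscale :: "complex \<Rightarrow> complex^'c^'r \<Rightarrow> complex^'c^'r" where
  "cscale c A = (\<chi> i j. c * A $ i $ j)"

definition psd :: "complex^'n^'n \<Rightarrow> bool" where
  "psd A \<longleftrightarrow> cadj A = A \<and> (\<forall>x::complex^'n. 0 \<le> (\<Sum>i\<in>UNIV. cnj (x $ i) * (A *v x) $ i))"

definition ker :: "complex^'c^'r \<Rightarrow> (complex^'c) set" where
  "ker A = {x. A *v x = 0}"

definition mp_inv :: "complex^'c^'r \<Rightarrow> complex^'r^'c" where
  "mp_inv A = (THE B. A ** B ** A = A \<and> B ** A ** B = B \<and>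
                      cadj (A ** B) = A ** B \<and> cadj (B ** A) = B ** A)"

definition clinear_map :: "(complex^'n^'n \<Rightarrow> complex^'m^'m) \<Rightarrow> bool" where
  "clinear_map \<phi> \<longleftrightarrow> (\<forall>A B. \<phi> (A + B) = \<phi> A + \<phi> B) \<and> (\<forall>c A. \<phi> (cscale c A) = cscale c (\<phi> A))"

definition positive_map :: "(complex^'n^'n \<Rightarrow> complex^'m^'m) \<Rightarrow> bool" where
  "positive_map \<phi> \<longleftrightarrow> clinear_map \<phi> \<and> (\<forall>A. psd A \<longrightarrow> psd (\<phi> A))"

definition hs_inner :: "complex^'n^'n \<Rightarrow> complex^'n^'n \<Rightarrow> complex" where
  "hs_inner A B = trace (cadj A ** B)"

definition is_hs_adjoint :: "(complex^'n^'n \<Rightarrow> complex^'m^'m) \<Rightarrow> (complex^'m^'m \<Rightarrow> complex^'n^'n) \<Rightarrow> bool" where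
  "is_hs_adjoint \<phi> \<psi> \<longleftrightarrow> (\<forall>X Y. hs_inner (\<psi> Y) X = hs_inner Y (\<phi> X))"

definition block2 :: "complex^'m^'m \<Rightarrow> complex^'m^'m \<Rightarrow> complex^'m^'m \<Rightarrow> complex^'m^'m
                      \<Rightarrow> complex^('m + 'm)^('m + 'm)" where
  "block2 A B C D = (\<chi> i j. case (i, j) of
       (Inl a, Inl b) \<Rightarrow> A $ a $ b | (Inl a, Inr b) \<Rightarrow> B $ a $ b
     | (Inr a, Inl b) \<Rightarrow> C $ a $ b | (Inr a, Inr b) \<Rightarrow> D $ a $ b)"

definition gen_schwarz :: "(complex^'n^'n \<Rightarrow> complex^'m^'m) \<Rightarrow> bool" where
  "gen_schwarz \<phi> \<longleftrightarrow> clinear_map \<phi> \<and>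
     (\<forall>K. psd (block2 (\<phi> (mat 1)) (\<phi> K) (cadj (\<phi> K)) (\<phi> (cadj K ** K))))"

end

theory Submission
  imports Defs
begin

text \<open>
  For \<open>Y = \<psi>(X)\<^sup>+ \<psi>(K)\<close>, the generalized Schwarz inequality at \<open>Y\<^sup>*\<close> says that the block matrix
  \<open>M = [\<phi>(1), \<phi>(Y)\<^sup>*; \<phi>(Y), \<phi>(Y Y\<^sup>*)]\<close> is positive semidefinite, and \<open>ker X \<subseteq> ker K\<^sup>*\<close>
  makes \<open>N = [K\<^sup>* X\<^sup>+ K, -K\<^sup>*; -K, X]\<close> positive semidefinite. Moving \<open>\<phi>\<close> across the trace
  pairing, both \<open>Tr[K\<^sup>* \<phi>(Y)]\<close> and \<open>Tr[X \<phi>(Y Y\<^sup>*)]\<close> equal \<open>Tr[\<psi>(K)\<^sup>* \<psi>(X)\<^sup>+ \<psi>(K)]\<close>,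
  so \<open>Tr[M N] \<ge> 0\<close> is exactly the trace inequality.

  Conversely, given \<open>K\<close> and vectors \<open>u, v\<close>, apply the trace inequality to \<open>v u\<^sup>*\<close> and the
  invertible matrix \<open>v v\<^sup>* + \<epsilon>\<close>. Its left-hand side is \<open>|v|\<^sup>2 / (|v|\<^sup>2 + \<epsilon>) \<langle>u, \<phi>(1) u\<rangle>\<close>,
  and completing the square with \<open>-K\<^sup>*\<close> bounds its right-hand side from below by
  \<open>-2 Re \<langle>u, \<phi>(K) v\<rangle> - \<langle>v, \<phi>(K\<^sup>* K) v\<rangle> - \<epsilon> Tr \<phi>(K\<^sup>* K)\<close>. Letting \<open>\<epsilon> \<rightarrow> 0\<close> shows that the
  quadratic form of \<open>[\<phi>(1), \<phi>(K); \<phi>(K)\<^sup>*, \<phi>(K\<^sup>* K)]\<close> is nonnegative at \<open>(u, v)\<close>.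

  Only elementary matrix theory is needed: \<open>Tr[M N] \<ge> 0\<close> for positive semidefinite \<open>M, N\<close>
  follows from a Cholesky-type splitting of \<open>N\<close> into rank-one terms, and the Moore--Penrose
  inverse of a Hermitian matrix \<open>C\<close> is built from the orthogonal decomposition along the range
  of \<open>C\<close>.
\<close>

section \<open>Complex vectors and matrices\<close>

definition cinner :: "complex^'n \<Rightarrow> complex^'n \<Rightarrow> complex" where
  "cinner x y = (\<Sum>i\<in>UNIV. cnj (x $ i) * y $ i)"

definition outer :: "complex^'n \<Rightarrow> complex^'m \<Rightarrow> complex^'m^'n" where
  "outer a b = (\<chi> i j. a $ i * cnj (b $ j))"

abbreviation hermitian :: "complex^'n^'n \<Rightarrow> bool" where
  "hermitian A \<equiv> cadj A = A"

lemma matrix_add_rdistrib: "(A + B) ** C = A ** C + B ** (C::'a::semiring_1^'p^'n)"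
  by (simp add: vec_eq_iff matrix_matrix_mult_def sum.distrib distrib_right)

lemma matrix_diff_ldistrib: "A ** (B - C) = A ** B - A ** (C::'a::ring_1^'p^'n)"
  by (simp add: vec_eq_iff matrix_matrix_mult_def sum_subtractf right_diff_distrib)

lemma matrix_diff_rdistrib: "(A - B) ** C = A ** C - B ** (C::'a::ring_1^'p^'n)"
  by (simp add: vec_eq_iff matrix_matrix_mult_def sum_subtractf left_diff_distrib)

lemma matrix_mul_uminus_left: "(- A) ** B = - (A ** (B::'a::ring_1^'p^'n))"
  by (simp add: vec_eq_iff matrix_matrix_mult_def sum_negf)

lemma matrix_mul_uminus_right: "A ** (- B) = - (A ** (B::'a::ring_1^'p^'n))"
  by (simp add: vec_eq_iff matrix_matrix_mult_def sum_negf)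

lemma matrix_vector_mult_uminus: "(- A) *v x = - (A *v (x::'a::ring_1^'n))"
  by (simp add: vec_eq_iff matrix_vector_mult_def sum_negf)

lemma matrix_vector_mult_scale: "A *v (c *s x) = c *s (A *v (x::'a::comm_semiring_1^'n))"
  by (simp add: matrix_vector_mult_def vec_eq_iff sum_distrib_left mult_ac)

lemma matrix_vector_mult_axis: "A *v axis k 1 = column k (A::'a::semiring_1^'n^'m)"
  by (simp add: column_def matrix_vector_mult_def vec_eq_iff axis_def if_distrib cong: if_cong)

lemma matrix_vector_mult_axis_nth: "(A *v axis k 1) $ i = (A::'a::semiring_1^'n^'m) $ i $ k"
  by (simp add: matrix_vector_mult_axis column_def)

lemma column_matrix_mult: "column j (A ** B) = A *v column j B"
  by (simp add: column_def matrix_matrix_mult_def matrix_vector_mult_def vec_eq_iff)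

lemma matrix_eq_columnsI: "(\<And>j. column j A = column j B) \<Longrightarrow> A = B"
  by (simp add: column_def vec_eq_iff)

lemma cadj_cadj [simp]: "cadj (cadj A) = A"
  by (simp add: cadj_def vec_eq_iff)

lemma cadj_mult: "cadj (A ** B) = cadj B ** cadj A"
  by (simp add: cadj_def vec_eq_iff matrix_matrix_mult_def mult.commute)

lemma cadj_mult3: "cadj (A ** B ** C) = cadj C ** cadj B ** cadj A"
  by (simp add: cadj_mult matrix_mul_assoc)

lemma cadj_add: "cadj (A + B) = cadj A + cadj B"
  by (simp add: cadj_def vec_eq_iff)

lemma cadj_diff: "cadj (A - B) = cadj A - cadj B"
  by (simp add: cadj_def vec_eq_iff)

lemma cadj_uminus: "cadj (- A) = - cadj A"
  by (simp add: cadj_def vec_eq_iff)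

lemma cadj_zero [simp]: "cadj 0 = 0"
  by (simp add: cadj_def vec_eq_iff)

lemma cadj_mat [simp]: "cadj (mat c) = mat (cnj c)"
  by (simp add: cadj_def vec_eq_iff mat_def)

lemma cadj_cscale: "cadj (cscale c A) = cscale (cnj c) (cadj A)"
  by (simp add: cadj_def cscale_def vec_eq_iff)

lemma cadj_outer: "cadj (outer a b) = outer b a"
  by (simp add: cadj_def outer_def vec_eq_iff mult.commute)

lemma hermitian_entry:
  assumes "hermitian A"
  shows "A $ j $ i = cnj (A $ i $ j)"
proof -
  have "cadj A $ j $ i = cnj (A $ i $ j)"
    by (simp add: cadj_def)
  then show ?thesis
    using assms by simp
qed

lemma trace_cadj: "trace (cadj A) = cnj (trace A)"
  by (simp add: trace_def cadj_def)

lemma trace_cscale: "trace (cscale c A) = c * trace A"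
  by (simp add: trace_def cscale_def sum_distrib_left)

lemma trace_uminus: "trace (- A) = - trace (A::'a::ring_1^'n^'n)"
  by (simp add: trace_def sum_negf)

lemma Im_eq_0_if_cnj_eq: "cnj z = z \<Longrightarrow> Im z = 0"
  by (simp add: complex_eq_iff)

lemma trace_hermitian_real: "hermitian A \<Longrightarrow> Im (trace A) = 0"
  by (metis trace_cadj Im_eq_0_if_cnj_eq)

lemma cscale_mult_left: "cscale c A ** B = cscale c (A ** B)"
  by (simp add: cscale_def vec_eq_iff matrix_matrix_mult_def sum_distrib_left mult.assoc)

lemma cscale_mult_right: "A ** cscale c B = cscale c (A ** B)"
  by (simp add: cscale_def vec_eq_iff matrix_matrix_mult_def sum_distrib_left mult.left_commute)

lemma cscale_add: "cscale c (A + B) = cscale c A + cscale c B"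
  by (simp add: cscale_def vec_eq_iff distrib_left)

lemma cscale_cscale: "cscale c (cscale d A) = cscale (c * d) A"
  by (simp add: cscale_def vec_eq_iff mult.assoc)

lemma cscale_minus_one: "cscale (-1) A = - A"
  by (simp add: cscale_def vec_eq_iff)

lemma mat_mult_left: "mat c ** A = cscale c (A::complex^'m^'n)"
  by (simp add: cscale_def mat_def matrix_matrix_mult_def vec_eq_iff if_distrib if_distribR cong: if_cong)

lemma matrix_vector_mult_cscale: "cscale c A *v x = c *s (A *v x)"
  by (simp add: matrix_vector_mult_def vec_eq_iff cscale_def sum_distrib_left mult.assoc)

lemma matrix_vector_mult_mat: "mat c *v x = c *s (x::complex^'n)"
  by (simp add: matrix_vector_mult_def mat_def vec_eq_iff if_distrib if_distribR cong: if_cong)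

lemma cinner_commute: "cinner y x = cnj (cinner x y)"
  by (simp add: cinner_def mult.commute)

lemma cinner_add_left: "cinner (x + y) z = cinner x z + cinner y z"
  by (simp add: cinner_def distrib_right sum.distrib)

lemma cinner_add_right: "cinner x (y + z) = cinner x y + cinner x z"
  by (simp add: cinner_def distrib_left sum.distrib)

lemma cinner_diff_left: "cinner (x - y) z = cinner x z - cinner y z"
  by (simp add: cinner_def left_diff_distrib sum_subtractf)

lemma cinner_diff_right: "cinner x (y - z) = cinner x y - cinner x z"
  by (simp add: cinner_def right_diff_distrib sum_subtractf)

lemma cinner_uminus_right: "cinner x (- y) = - cinner x y"
  by (simp add: cinner_def sum_negf)

lemma cinner_scale_left: "cinner (c *s x) y = cnj c * cinner x y"
  by (simp add: cinner_def sum_distrib_left mult_ac)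

lemma cinner_scale_right: "cinner x (c *s y) = c * cinner x y"
  by (simp add: cinner_def sum_distrib_left mult_ac)

lemma cinner_zero_right [simp]: "cinner x 0 = 0"
  by (simp add: cinner_def)

lemma cinner_axis_left: "cinner (axis i 1) y = y $ i"
proof -
  have "cinner (axis i 1) y = (\<Sum>j\<in>UNIV. if j = i then y $ j else 0)"
    unfolding cinner_def by (rule sum.cong) (auto simp: axis_def)
  then show ?thesis
    by simp
qed

lemma cinner_cadj_right: "cinner x (A *v y) = cinner (cadj A *v x) y"
  unfolding cinner_def cadj_def matrix_vector_mult_def
  by (simp add: sum_distrib_left sum_distrib_right mult_ac) (rule sum.swap)

lemma cinner_cadj_quadratic: "cinner x (cadj A *v x) = cnj (cinner x (A *v x))"
  using cinner_cadj_right[of x "cadj A" x] cinner_commute[of "A *v x" x] by simp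

lemma hermitian_cinner_real: "hermitian A \<Longrightarrow> Im (cinner x (A *v x)) = 0"
  by (metis cinner_cadj_quadratic Im_eq_0_if_cnj_eq)

lemma cinner_self: "cinner x x = of_real (\<Sum>i\<in>UNIV. (cmod (x $ i))\<^sup>2)"
  unfolding cinner_def of_real_sum
  by (rule sum.cong) (simp_all only: complex_norm_square mult.commute)

lemma cinner_self_nonneg: "0 \<le> cinner x x"
  unfolding cinner_self less_eq_complex_def by (simp add: sum_nonneg)

lemma cinner_self_eq_0: "cinner x x = 0 \<longleftrightarrow> x = 0"
proof
  assume "cinner x x = 0"
  then have "\<forall>i\<in>UNIV. (cmod (x $ i))\<^sup>2 = 0"
    unfolding cinner_self of_real_eq_0_iff by (subst (asm) sum_nonneg_eq_0_iff) auto
  then show "x = 0"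
    by (simp add: vec_eq_iff)
qed simp

lemma outer_mult_vec: "outer a b *v x = cinner b x *s a"
  by (simp add: outer_def cinner_def matrix_vector_mult_def vec_eq_iff sum_distrib_left mult_ac)

lemma outer_add_left: "outer (a + b) c = outer a c + outer b c"
  by (simp add: outer_def vec_eq_iff distrib_right)

lemma outer_add_right: "outer a (b + c) = outer a b + outer a c"
  by (simp add: outer_def vec_eq_iff distrib_left)

lemma outer_scale_left: "outer (t *s a) b = cscale t (outer a b)"
  by (simp add: outer_def cscale_def vec_eq_iff mult.assoc)

lemma outer_scale_right: "outer a (t *s b) = cscale (cnj t) (outer a b)"
  by (simp add: outer_def cscale_def vec_eq_iff mult_ac)

lemma trace_mult_outer: "trace (A ** outer x y) = cinner y (A *v x)"
  unfolding trace_def cinner_def outer_def matrix_matrix_mult_def matrix_vector_mult_def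
  by (simp add: sum_distrib_left sum_distrib_right mult_ac)

lemma trace_outer_mult: "trace (outer x y ** A) = cinner y (A *v x)"
  by (simp add: trace_mul_sym[of "outer x y"] trace_mult_outer)

lemma outer_sandwich: "outer a b ** M ** outer c d = cscale (cinner b (M *v c)) (outer a d)"
  unfolding matrix_eq
proof
  fix x
  have "(outer a b ** M ** outer c d) *v x = outer a b *v (M *v (outer c d *v x))"
    by (simp only: matrix_vector_mul_assoc matrix_mul_assoc)
  also have "\<dots> = cscale (cinner b (M *v c)) (outer a d) *v x"
    by (simp add: outer_mult_vec matrix_vector_mult_scale cinner_scale_right matrix_vector_mult_cscale
        mult.commute)
  finally show "(outer a b ** M ** outer c d) *v x = cscale (cinner b (M *v c)) (outer a d) *v x" .
qed

lemma hs_inner_conj: "hs_inner B A = cnj (hs_inner A B)"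
  by (simp add: hs_inner_def trace_cadj[symmetric] cadj_mult)

lemma hs_inner_outer: "hs_inner (outer a b) M = cinner a (M *v b)"
  by (simp add: hs_inner_def cadj_outer trace_outer_mult)

lemma hs_inner_eqI:
  assumes "\<And>W. hs_inner A W = hs_inner B W"
  shows "A = B"
proof -
  have "cnj (A $ i $ j) = cnj (B $ i $ j)" for i j
    using assms[of "outer (axis i 1) (axis j 1)"]
    by (simp add: hs_inner_def trace_mult_outer cinner_axis_left matrix_vector_mult_axis column_def cadj_def)
  then show ?thesis
    by (simp add: vec_eq_iff)
qed

section \<open>The Moore--Penrose inverse of a Hermitian matrix\<close>

definition penrose :: "complex^'c^'r \<Rightarrow> complex^'r^'c \<Rightarrow> bool" where
  "penrose A B \<longleftrightarrow> A ** B ** A = A \<and> B ** A ** B = B \<and>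
     cadj (A ** B) = A ** B \<and> cadj (B ** A) = B ** A"

lemma penrose_unique:
  assumes "penrose A B" and "penrose A B'"
  shows "B = B'"
proof -
  from assms(1) have ABA: "A ** B ** A = A" and BAB: "B ** A ** B = B"
    and AB: "cadj (A ** B) = A ** B" and BA: "cadj (B ** A) = B ** A"
    by (auto simp: penrose_def)
  from assms(2) have AB'A: "A ** B' ** A = A" and B'AB': "B' ** A ** B' = B'"
    and AB': "cadj (A ** B') = A ** B'" and B'A: "cadj (B' ** A) = B' ** A"
    by (auto simp: penrose_def)
  have "A ** B = cadj B ** cadj (A ** B' ** A)"
    using AB AB'A by (simp add: cadj_mult)
  also have "\<dots> = cadj (A ** B) ** (A ** B')"
    using AB' by (simp add: cadj_mult matrix_mul_assoc)
  also have "\<dots> = (A ** B ** A) ** B'"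
    by (simp only: AB matrix_mul_assoc)
  finally have same_AB: "A ** B = A ** B'"
    using ABA by simp
  have "B ** A = cadj (A ** B' ** A) ** cadj B"
    using BA AB'A by (simp add: cadj_mult)
  also have "\<dots> = (B' ** A) ** cadj (B ** A)"
    using B'A by (simp add: cadj_mult matrix_mul_assoc)
  also have "\<dots> = B' ** (A ** B ** A)"
    by (simp only: BA matrix_mul_assoc)
  finally have same_BA: "B ** A = B' ** A"
    using ABA by simp
  have "B = B ** (A ** B)"
    by (simp only: matrix_mul_assoc BAB)
  also have "\<dots> = (B ** A) ** B'"
    by (simp only: same_AB matrix_mul_assoc)
  also have "\<dots> = B'"
    by (simp only: same_BA B'AB')
  finally show ?thesis .
qed

lemma mp_inv_eqI: "penrose A B \<Longrightarrow> mp_inv A = B"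
  unfolding mp_inv_def penrose_def[symmetric]
  by (rule the_equality) (auto intro: penrose_unique)

lemma penrose_cadj: "penrose A B \<Longrightarrow> penrose (cadj A) (cadj B)"
  unfolding penrose_def by (metis cadj_cadj cadj_mult cadj_mult3)

lemma cadj_mult_self_eq_0: "cadj D ** D = 0 \<Longrightarrow> D = 0"
proof (rule matrix_eq_columnsI)
  fix j
  assume "cadj D ** D = 0"
  moreover have "cinner (column j D) (column j D) = (cadj D ** D) $ j $ j"
    by (simp add: cinner_def cadj_def column_def matrix_matrix_mult_def)
  ultimately show "column j D = column j 0"
    by (simp add: cinner_self_eq_0 column_def vec_eq_iff)
qed

lemma hermitian_mult_cancel:
  assumes "hermitian C" and "C ** (C ** E) = 0"
  shows "C ** E = 0"
proof (rule cadj_mult_self_eq_0)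
  show "cadj (C ** E) ** (C ** E) = 0"
    using assms by (simp add: cadj_mult matrix_mul_assoc[symmetric])
qed

lemma hermitian_range_decomp:
  assumes "hermitian C"
  shows "\<exists>g z. y = C *v g + z \<and> C *v z = 0"
proof -
  let ?S = "range (\<lambda>x. C *v x)"
  have "subspace ?S"
    unfolding subspace_def
    by (metis (no_types, lifting) rangeE rangeI matrix_vector_mult_0_right matrix_vector_right_distrib
        matrix_vector_mul_linear linear_scale)
  then have span_S: "span ?S = ?S"
    by (simp add: span_eq_iff)
  obtain r z where "r \<in> span ?S" and z_orth: "\<And>w. w \<in> span ?S \<Longrightarrow> orthogonal z w" and "y = r + z"
    by (rule orthogonal_subspace_decomp_exists[of ?S y]) blast
  then obtain g where y: "y = C *v g + z"
    unfolding span_S by blast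
  have z_orth_range: "cinner z (C *v x) = 0" for x
  proof -
    have "Re (cinner z (C *v w)) = 0" for w
      using z_orth[of "C *v w"] unfolding span_S
      by (simp add: orthogonal_def inner_vec_def cinner_def inner_complex_def Re_sum)
    from this[of x] this[of "\<i> *s x"] show ?thesis
      by (simp add: matrix_vector_mult_scale cinner_scale_right complex_eq_iff)
  qed
  have "cinner (C *v z) (C *v z) = cinner z (C *v (C *v z))"
    using assms by (simp add: cinner_cadj_right)
  then have "C *v z = 0"
    using z_orth_range by (simp add: cinner_self_eq_0)
  with y show ?thesis
    by blast
qed

lemma hermitian_range_square:
  assumes "hermitian C"
  shows "\<exists>g. C *v y = C *v (C *v g)"
proof -
  obtain g z where "y = C *v g + z" and "C *v z = 0"
    using hermitian_range_decomp[OF assms] by blast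
  then show ?thesis
    by (metis add.right_neutral matrix_vector_right_distrib)
qed

lemma hermitian_mult_square_eq:
  assumes C: "hermitian C"
  shows "\<exists>G. C ** (C ** G) = C"
proof -
  have "\<forall>j. \<exists>g. C *v axis j 1 = C *v (C *v g)"
    using hermitian_range_square[OF C] by blast
  then obtain g where g: "C *v axis j 1 = C *v (C *v g j)" for j
    by metis
  define G where "G = (\<chi> i j. g j $ i)"
  have "C ** (C ** G) = C"
  proof (rule matrix_eq_columnsI)
    fix j
    have "column j G = g j"
      by (simp add: G_def column_def vec_eq_iff)
    then show "column j (C ** (C ** G)) = column j C"
      by (simp add: g matrix_vector_mult_axis[symmetric] matrix_vector_mul_assoc[symmetric])
  qed
  then show ?thesis
    by blast
qed

text \<open>With \<open>C C G = C\<close> and \<open>Q = C G\<close>, the matrix \<open>G\<^sup>* C G = Q G\<close> satisfies the Penrose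
  equations: \<open>Q\<close> turns out to be a Hermitian projection with \<open>C Q = Q C = C\<close>.\<close>

lemma hermitian_penrose_exists:
  assumes C: "hermitian C"
  shows "\<exists>M. penrose C M"
proof -
  obtain G where CCG: "C ** (C ** G) = C"
    using hermitian_mult_square_eq[OF C] by blast
  define Q where "Q = C ** G"
  have CQ: "C ** Q = C"
    using CCG by (simp add: Q_def)
  have QC: "Q ** C = C"
  proof -
    have "C ** (C ** (G ** C - mat 1)) = 0"
      using CCG by (simp add: matrix_diff_ldistrib matrix_mul_assoc)
    then have "C ** (G ** C - mat 1) = 0"
      by (rule hermitian_mult_cancel[OF C])
    then show ?thesis
      by (simp add: Q_def matrix_diff_ldistrib matrix_mul_assoc)
  qed
  have Q: "hermitian Q"
  proof -
    have "cadj Q ** C = C"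
      using CQ C by (metis cadj_mult)
    then have "cadj Q ** Q = Q"
      by (simp add: Q_def matrix_mul_assoc)
    then show ?thesis
      by (metis cadj_cadj cadj_mult)
  qed
  then have "cadj G ** C = Q"
    using C by (simp add: Q_def cadj_mult)
  then have QGC: "Q ** G ** C = Q"
    using QC by (metis Q_def matrix_mul_assoc)
  have QQ: "Q ** Q = Q"
    using QC by (simp add: Q_def matrix_mul_assoc)
  have "penrose C (Q ** G)"
    unfolding penrose_def using CQ QC QGC QQ Q by (simp add: matrix_mul_assoc Q_def[symmetric])
  then show ?thesis
    by blast
qed

lemma hermitian_mp_inv:
  assumes "hermitian C"
  shows "penrose C (mp_inv C)" and "hermitian (mp_inv C)"
proof -
  obtain M where "penrose C M"
    using hermitian_penrose_exists[OF assms] by blast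
  then show C: "penrose C (mp_inv C)"
    by (metis mp_inv_eqI)
  then have "penrose C (cadj (mp_inv C))"
    using penrose_cadj[OF C] assms by simp
  then show "hermitian (mp_inv C)"
    using C penrose_unique by blast
qed

lemma ker_mult_eq_0:
  assumes "C ** E = 0" and "ker C \<subseteq> ker D"
  shows "D ** E = 0"
proof (rule matrix_eq_columnsI)
  fix j
  have "C *v column j E = 0"
    using assms(1) column_matrix_mult[of j C E] by (simp add: column_def vec_eq_iff)
  then have "D *v column j E = 0"
    using assms(2) by (auto simp: ker_def)
  then show "column j (D ** E) = column j 0"
    by (subst column_matrix_mult) (simp add: column_def vec_eq_iff)
qed

text \<open>The kernel condition says that the range of \<open>B\<close> lies in that of \<open>C = C\<^sup>*\<close>, on which
  \<open>C C\<^sup>+\<close> is the identity.\<close>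

lemma hermitian_mp_inv_range:
  assumes C: "hermitian C" and ker: "ker C \<subseteq> ker (cadj B)"
  shows "C ** mp_inv C ** B = B"
proof -
  define E where "E = mat 1 - C ** mp_inv C"
  have "penrose C (mp_inv C)"
    using hermitian_mp_inv(1)[OF C] .
  then have E: "hermitian E" and "E ** C = 0"
    by (simp_all add: E_def penrose_def cadj_diff matrix_diff_rdistrib)
  then have "C ** E = 0"
    using C by (metis cadj_mult cadj_zero)
  then have "cadj B ** E = 0"
    using ker by (rule ker_mult_eq_0)
  then have "E ** B = 0"
    using E by (metis cadj_cadj cadj_mult cadj_zero)
  then show ?thesis
    by (simp add: E_def matrix_diff_rdistrib)
qed

section \<open>Positive semidefinite matrices\<close>

lemma psd_iff_cinner: "psd A \<longleftrightarrow> hermitian A \<and> (\<forall>x. 0 \<le> cinner x (A *v x))"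
  by (simp add: psd_def cinner_def)

lemma psd_hermitian: "psd A \<Longrightarrow> hermitian A"
  by (simp add: psd_def)

lemma psd_cinner_nonneg: "psd A \<Longrightarrow> 0 \<le> cinner x (A *v x)"
  by (simp add: psd_iff_cinner)

lemma psd_diag_nonneg: "psd A \<Longrightarrow> 0 \<le> A $ k $ k"
  using psd_cinner_nonneg[of A "axis k 1"]
  by (simp add: cinner_axis_left matrix_vector_mult_axis column_def)

lemma psd_add: "psd A \<Longrightarrow> psd B \<Longrightarrow> psd (A + B)"
  by (simp add: psd_iff_cinner cadj_add matrix_vector_mult_add_rdistrib cinner_add_right)

lemma psd_outer: "psd (outer x x)"
proof -
  have "cinner y (outer x x *v y) = of_real ((cmod (cinner x y))\<^sup>2)" for y
    by (simp add: outer_mult_vec cinner_scale_right cinner_commute[of y x] complex_norm_square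
        del: of_real_power)
  then show ?thesis
    by (simp add: psd_iff_cinner cadj_outer less_eq_complex_def)
qed

lemma psd_cadj_mult: "psd (cadj K ** K)"
proof -
  have "cinner y ((cadj K ** K) *v y) = cinner (K *v y) (K *v y)" for y
    by (simp add: cinner_cadj_right matrix_vector_mul_assoc[symmetric])
  then show ?thesis
    by (simp add: psd_iff_cinner cadj_mult cinner_self_nonneg)
qed

lemma psd_mat:
  assumes "0 \<le> c"
  shows "psd (mat (of_real c))"
proof -
  have "0 \<le> complex_of_real c"
    using assms by (simp add: less_eq_complex_def)
  then show ?thesis
    by (simp add: psd_iff_cinner matrix_vector_mult_mat cinner_scale_right cinner_self_nonneg)
qed

lemma psd_diag_eq_0:
  assumes X: "psd X" and Xkk: "X $ k $ k = 0"
  shows "X $ k $ j = 0"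
proof (rule ccontr)
  assume "X $ k $ j \<noteq> 0"
  define a where "a = X $ k $ j"
  define d where "d = Re (X $ j $ j)"
  define r where "r = (\<bar>d\<bar> + 1) / (2 * (cmod a)\<^sup>2)"
  define t where "t = - (of_real r * a)"
  define x where "x = t *s axis k 1 + axis j 1"
  have Xjk: "X $ j $ k = cnj a"
    using hermitian_entry[OF psd_hermitian[OF X], of j k] by (simp add: a_def)
  have "cinner x (X *v x) = t * (cnj t * X $ k $ k + X $ j $ k) + (cnj t * X $ k $ j + X $ j $ j)"
    unfolding x_def matrix_vector_right_distrib matrix_vector_mult_scale cinner_add_left
      cinner_add_right cinner_scale_left cinner_scale_right cinner_axis_left
      matrix_vector_mult_axis_nth vector_add_component vector_smult_component ..
  also have "\<dots> = - (2 * of_real r * (a * cnj a)) + X $ j $ j"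
    unfolding t_def Xkk Xjk a_def[symmetric] by (simp add: algebra_simps)
  finally have "Re (cinner x (X *v x)) = - (2 * r * (cmod a)\<^sup>2) + d"
    by (simp add: d_def flip: complex_norm_square del: of_real_power)
  moreover have "0 \<le> Re (cinner x (X *v x))"
    using psd_cinner_nonneg[OF X] by (simp add: less_eq_complex_def)
  moreover have "2 * r * (cmod a)\<^sup>2 = \<bar>d\<bar> + 1"
    using \<open>X $ k $ j \<noteq> 0\<close> by (simp add: r_def a_def)
  ultimately show False
    by linarith
qed

definition nonzero_rows :: "complex^'n^'m \<Rightarrow> 'm set" where
  "nonzero_rows X = {i. \<exists>j. X $ i $ j \<noteq> 0}"

text \<open>One step of a Cholesky decomposition: subtracting the rank-one matrix of a nonzero pivot
  column keeps the matrix positive semidefinite and clears the pivot row.\<close>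

lemma psd_minus_pivot_outer:
  assumes X: "psd X" and r: "X $ k $ k = of_real r" "r > 0"
  shows "psd (X - cscale (of_real (1 / r)) (outer (column k X) (column k X)))"
    (is "psd (X - ?P)")
proof -
  have herm: "cnj (X $ i $ k) = X $ k $ i" for i
    using hermitian_entry[OF psd_hermitian[OF X], of k i] by simp
  have "0 \<le> cinner y ((X - ?P) *v y)" for y
  proof -
    define \<beta> where "\<beta> = cinner (column k X) y"
    have Xy_k: "(X *v y) $ k = \<beta>"
      by (simp add: \<beta>_def cinner_def column_def matrix_vector_mult_def herm mult.commute)
    have Xkk: "column k X $ k = of_real r"
      using r(1) by (simp add: column_def)
    define z where "z = y - (\<beta> / of_real r) *s axis k 1"
    have "cinner z (X *v z) = cinner y (X *v y) - cnj \<beta> * \<beta> / of_real r"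
      using r(2)
      by (simp add: z_def matrix_vector_mult_diff_distrib matrix_vector_mult_scale cinner_diff_left
          cinner_diff_right cinner_scale_left cinner_scale_right cinner_axis_left Xy_k
          matrix_vector_mult_axis Xkk cinner_commute[of y "column k X"] \<beta>_def[symmetric] field_simps)
    also have "\<dots> = cinner y ((X - ?P) *v y)"
      by (simp add: matrix_vector_mult_diff_rdistrib matrix_vector_mult_cscale outer_mult_vec
          cinner_diff_right cinner_scale_right \<beta>_def cinner_commute[of y "column k X"])
    finally show ?thesis
      using psd_cinner_nonneg[OF X] by metis
  qed
  moreover have "hermitian (X - ?P)"
    using psd_hermitian[OF X] by (simp add: cadj_diff cadj_cscale cadj_outer)
  ultimately show ?thesis
    by (simp add: psd_iff_cinner)
qed

lemma nonzero_rows_minus_pivot_outer: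
  assumes X: "hermitian X" and r: "X $ k $ k = of_real r" "r > 0" and "k \<in> nonzero_rows X"
  shows "nonzero_rows (X - cscale (of_real (1 / r)) (outer (column k X) (column k X)))
    \<subset> nonzero_rows X"
    (is "nonzero_rows ?X' \<subset> _")
proof -
  have entry: "?X' $ i $ j = X $ i $ j - X $ i $ k * X $ k $ j / of_real r" for i j
    by (simp add: cscale_def outer_def column_def hermitian_entry[OF X, of j k])
  have "?X' $ k $ j = 0" for j
    unfolding entry using r by simp
  moreover have "?X' $ i $ j = 0" if "i \<notin> nonzero_rows X" for i j
    unfolding entry using that by (simp add: nonzero_rows_def)
  ultimately have "nonzero_rows ?X' \<subseteq> nonzero_rows X - {k}"
    unfolding nonzero_rows_def by blast
  then show ?thesis
    using assms(4) by blast
qed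

lemma psd_pivot:
  assumes N: "psd N" and "k \<in> nonzero_rows N"
  shows "N $ k $ k = of_real (Re (N $ k $ k))" and "Re (N $ k $ k) > 0"
proof -
  obtain j where "N $ k $ j \<noteq> 0"
    using assms(2) by (auto simp: nonzero_rows_def)
  then have "N $ k $ k \<noteq> 0"
    using psd_diag_eq_0[OF N] by blast
  then show "N $ k $ k = of_real (Re (N $ k $ k))" and "Re (N $ k $ k) > 0"
    using psd_diag_nonneg[OF N, of k] by (auto simp: less_eq_complex_def complex_eq_iff)
qed

lemma trace_psd_mult_nonneg:
  assumes M: "psd M" and "psd N"
  shows "0 \<le> trace (M ** N)"
  using assms(2)
proof (induction "card (nonzero_rows N)" arbitrary: N rule: less_induct)
  case less
  show ?case
  proof (cases "nonzero_rows N = {}")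
    case True
    then have "N = 0"
      by (auto simp: nonzero_rows_def vec_eq_iff)
    then show ?thesis
      by (simp add: trace_def)
  next
    case False
    then obtain k where k: "k \<in> nonzero_rows N"
      by blast
    note r = psd_pivot[OF less.prems k]
    define x where "x = column k N"
    define c where "c = 1 / Re (N $ k $ k)"
    define N' where "N' = N - cscale (of_real c) (outer x x)"
    have "psd N'"
      unfolding N'_def x_def c_def by (rule psd_minus_pivot_outer[OF less.prems r])
    moreover have "nonzero_rows N' \<subset> nonzero_rows N"
      unfolding N'_def x_def c_def
      by (rule nonzero_rows_minus_pivot_outer[OF psd_hermitian[OF less.prems] r k])
    then have "card (nonzero_rows N') < card (nonzero_rows N)"
      by (rule psubset_card_mono[OF finite])
    ultimately have "0 \<le> trace (M ** N')"
      using less.hyps by blast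
    moreover have "0 \<le> of_real c * cinner x (M *v x)"
      using r(2) psd_cinner_nonneg[OF M] by (simp add: c_def less_eq_complex_def)
    moreover have "N = cscale (of_real c) (outer x x) + N'"
      by (simp add: N'_def)
    ultimately show ?thesis
      by (simp add: matrix_add_ldistrib trace_add cscale_mult_right trace_cscale trace_mult_outer)
  qed
qed

lemma trace_psd_sandwich_nonneg:
  assumes "psd C"
  shows "0 \<le> trace (cadj Z ** C ** Z)"
proof -
  have "trace (cadj Z ** C ** Z) = trace (C ** (Z ** cadj Z))"
    by (metis matrix_mul_assoc trace_mul_sym)
  also have "0 \<le> \<dots>"
    using trace_psd_mult_nonneg[OF assms] psd_cadj_mult[of "cadj Z"] by simp
  finally show ?thesis .
qed

lemma psd_trace_eq_0:
  assumes Q: "psd Q" and "trace Q = 0"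
  shows "Q = 0"
proof -
  have "\<forall>k\<in>UNIV. 0 \<le> Re (Q $ k $ k)"
    using psd_diag_nonneg[OF Q] by (simp add: less_eq_complex_def)
  moreover have "(\<Sum>k\<in>UNIV. Re (Q $ k $ k)) = 0"
    using \<open>trace Q = 0\<close> by (simp add: trace_def flip: Re_sum)
  ultimately have "Re (Q $ k $ k) = 0" for k
    by (simp add: sum_nonneg_eq_0_iff)
  then have "Q $ k $ k = 0" for k
    using psd_diag_nonneg[OF Q, of k] by (simp add: less_eq_complex_def complex_eq_iff)
  then show ?thesis
    using psd_diag_eq_0[OF Q] by (simp add: vec_eq_iff)
qed

lemma cmod_cinner_matrix_le:
  "cmod (cinner x (H *v x))
    \<le> (\<Sum>i\<in>UNIV. \<Sum>j\<in>UNIV. cmod (H $ i $ j)) * (\<Sum>k\<in>UNIV. (cmod (x $ k))\<^sup>2)"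
proof -
  define S where "S = (\<Sum>k\<in>UNIV. (cmod (x $ k))\<^sup>2)"
  have "cmod (x $ i) * cmod (x $ j) \<le> S" for i j
  proof -
    have "2 * (cmod (x $ i) * cmod (x $ j)) \<le> (cmod (x $ i))\<^sup>2 + (cmod (x $ j))\<^sup>2"
      using sum_squares_bound[of "cmod (x $ i)" "cmod (x $ j)"] by simp
    moreover have "(cmod (x $ i))\<^sup>2 \<le> S" "(cmod (x $ j))\<^sup>2 \<le> S"
      unfolding S_def by (auto intro!: member_le_sum)
    ultimately show ?thesis
      by linarith
  qed
  then have "cmod (x $ i) * cmod (H $ i $ j) * cmod (x $ j) \<le> cmod (H $ i $ j) * S" for i j
    by (metis mult.commute mult.left_commute mult_left_mono norm_ge_zero)
  then have "cmod (cnj (x $ i) * (H *v x) $ i) \<le> (\<Sum>j\<in>UNIV. cmod (H $ i $ j) * S)" for i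
    unfolding matrix_vector_mult_def vec_lambda_beta norm_mult complex_mod_cnj
    by (intro order.trans[OF mult_left_mono[OF norm_sum]])
      (auto simp: sum_distrib_left norm_mult mult.assoc intro: sum_mono)
  then show ?thesis
    unfolding cinner_def S_def[symmetric] sum_distrib_right
    by (intro order.trans[OF norm_sum] sum_mono)
qed

lemma hermitian_plus_mat_psd:
  assumes H: "hermitian H"
  shows "\<exists>c\<ge>0. psd (H + mat (of_real c))"
proof -
  define c where "c = (\<Sum>i\<in>UNIV. \<Sum>j\<in>UNIV. cmod (H $ i $ j))"
  have "0 \<le> cinner x ((H + mat (of_real c)) *v x)" for x
  proof -
    define S where "S = (\<Sum>k\<in>UNIV. (cmod (x $ k))\<^sup>2)"
    have "- (c * S) \<le> Re (cinner x (H *v x))"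
      using cmod_cinner_matrix_le[of x H] abs_Re_le_cmod[of "cinner x (H *v x)"]
      unfolding c_def S_def by linarith
    moreover have "Im (cinner x (H *v x)) = 0"
      using hermitian_cinner_real[OF H] .
    moreover have "cinner x ((H + mat (of_real c)) *v x) = cinner x (H *v x) + of_real (c * S)"
      by (simp add: matrix_vector_mult_add_rdistrib cinner_add_right matrix_vector_mult_mat
          cinner_scale_right cinner_self S_def)
    ultimately show ?thesis
      by (simp add: less_eq_complex_def)
  qed
  moreover have "c \<ge> 0"
    by (simp add: c_def sum_nonneg)
  ultimately show ?thesis
    using H by (auto simp: psd_iff_cinner cadj_add)
qed

lemma cinner_quadratic_form_eq_0:
  assumes "\<And>w. cinner w (M *v w) = 0"
  shows "M = 0"
proof -
  have e: "cinner (axis i 1) (M *v axis j 1) = M $ i $ j" for i j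
    by (simp add: cinner_axis_left matrix_vector_mult_axis column_def)
  have "M $ i $ j = 0" for i j
  proof -
    have "M $ i $ i = 0" "M $ j $ j = 0"
      using assms[of "axis i 1"] assms[of "axis j 1"] e by auto
    moreover have "cinner (axis i 1 + axis j 1) (M *v (axis i 1 + axis j 1)) = 0"
      "cinner (axis i 1 + \<i> *s axis j 1) (M *v (axis i 1 + \<i> *s axis j 1)) = 0"
      by (rule assms)+
    ultimately have "M $ i $ j + M $ j $ i = 0" "\<i> * M $ i $ j - \<i> * M $ j $ i = 0"
      by (simp_all add: matrix_vector_right_distrib matrix_vector_mult_scale cinner_add_left
          cinner_add_right cinner_scale_left cinner_scale_right e algebra_simps)
    then show ?thesis
      by (simp add: algebra_simps)
  qed
  then show ?thesis
    by (simp add: vec_eq_iff)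
qed

section \<open>Positive maps and their Hilbert--Schmidt adjoints\<close>

lemma clinear_map_add: "clinear_map \<phi> \<Longrightarrow> \<phi> (A + B) = \<phi> A + \<phi> B"
  by (simp add: clinear_map_def)

lemma clinear_map_cscale: "clinear_map \<phi> \<Longrightarrow> \<phi> (cscale c A) = cscale c (\<phi> A)"
  by (simp add: clinear_map_def)

lemma clinear_map_diff: "clinear_map \<phi> \<Longrightarrow> \<phi> (A - B) = \<phi> A - \<phi> B"
  using clinear_map_add[of \<phi> A "- B"] clinear_map_cscale[of \<phi> "-1"] by (simp add: cscale_minus_one)

lemma positive_map_clinear: "positive_map \<phi> \<Longrightarrow> clinear_map \<phi>"
  by (simp add: positive_map_def)

lemma positive_map_psd: "positive_map \<phi> \<Longrightarrow> psd A \<Longrightarrow> psd (\<phi> A)"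
  by (simp add: positive_map_def)

lemma positive_map_hermitian:
  assumes \<phi>: "positive_map \<phi>" and H: "hermitian H"
  shows "hermitian (\<phi> H)"
proof -
  obtain c where "c \<ge> 0" and "psd (H + mat (of_real c))"
    using hermitian_plus_mat_psd[OF H] by blast
  then have "psd (\<phi> (H + mat (of_real c)))" and "psd (\<phi> (mat (of_real c)))"
    using positive_map_psd[OF \<phi>] psd_mat by blast+
  moreover have "\<phi> H = \<phi> (H + mat (of_real c)) - \<phi> (mat (of_real c))"
    using clinear_map_diff[OF positive_map_clinear[OF \<phi>]] by (metis add_diff_cancel_right')
  ultimately show ?thesis
    by (simp add: cadj_diff psd_hermitian)
qed

lemma positive_map_cadj:
  assumes \<phi>: "positive_map \<phi>"
  shows "\<phi> (cadj Y) = cadj (\<phi> Y)"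
proof -
  have lin: "clinear_map \<phi>"
    using \<phi> by (rule positive_map_clinear)
  define H1 where "H1 = cscale (1/2) (Y + cadj Y)"
  define H2 where "H2 = cscale (- \<i>/2) (Y - cadj Y)"
  have "hermitian H1" "hermitian H2"
    by (simp_all add: H1_def H2_def cadj_def cscale_def vec_eq_iff algebra_simps)
  then have herm: "hermitian (\<phi> H1)" "hermitian (\<phi> H2)"
    using positive_map_hermitian[OF \<phi>] by blast+
  have "Y = H1 + cscale \<i> H2" and "cadj Y = H1 + cscale (- \<i>) H2"
    by (simp_all add: H1_def H2_def cscale_def cadj_def vec_eq_iff field_simps)
  then show ?thesis
    using herm by (metis clinear_map_add[OF lin] clinear_map_cscale[OF lin] cadj_add cadj_cscale
        complex_cnj_i)
qed

lemma complex_quadratic_nonneg_imp_eq_0: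
  fixes \<alpha> \<gamma> :: complex
  assumes nonneg: "\<And>t. 0 \<le> Re (cnj t * \<alpha> + t * cnj \<alpha> + t * cnj t * \<gamma>)" and "0 \<le> \<gamma>"
  shows "\<alpha> = 0"
proof -
  define g where "g = Re \<gamma>"
  have g: "g \<ge> 0" "\<gamma> = of_real g"
    using \<open>0 \<le> \<gamma>\<close> by (simp_all add: g_def less_eq_complex_def complex_eq_iff)
  define r where "r = 1 / (g + 1)"
  have "r > 0" and "r * g < 1"
    using g by (simp_all add: r_def field_simps)
  then have r: "r * (r * g - 2) < 0"
    by (simp add: mult_pos_neg)
  have "cnj (- (of_real r * \<alpha>)) * \<alpha> + - (of_real r * \<alpha>) * cnj \<alpha>
      + - (of_real r * \<alpha>) * cnj (- (of_real r * \<alpha>)) * \<gamma>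
      = of_real r * (\<alpha> * cnj \<alpha>) * (of_real r * \<gamma> - 2)"
    by (simp add: algebra_simps)
  also have "\<dots> = of_real ((cmod \<alpha>)\<^sup>2 * (r * (r * g - 2)))"
    by (simp only: g(2) complex_norm_square[symmetric]) (simp add: algebra_simps)
  finally have "0 \<le> (cmod \<alpha>)\<^sup>2 * (r * (r * g - 2))"
    using nonneg[of "- (of_real r * \<alpha>)"] by (simp only: Re_complex_of_real)
  moreover have "(cmod \<alpha>)\<^sup>2 * (r * (r * g - 2)) \<le> 0"
    using r by (intro mult_nonneg_nonpos zero_le_power2 less_imp_le)
  ultimately have "(cmod \<alpha>)\<^sup>2 = 0"
    using r by (metis antisym less_irrefl mult_eq_0_iff)
  then show ?thesis
    by simp
qed

lemma positive_map_outer_eq_0: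
  assumes \<phi>: "positive_map \<phi>" and xx: "\<phi> (outer x x) = 0"
  shows "\<phi> (outer x y) = 0"
proof (rule cinner_quadratic_form_eq_0)
  fix w
  have lin: "clinear_map \<phi>"
    using \<phi> by (rule positive_map_clinear)
  define \<alpha> where "\<alpha> = cinner w (\<phi> (outer x y) *v w)"
  define \<gamma> where "\<gamma> = cinner w (\<phi> (outer y y) *v w)"
  have yx: "cinner w (\<phi> (outer y x) *v w) = cnj \<alpha>"
    using positive_map_cadj[OF \<phi>, of "outer x y"]
    by (simp add: \<alpha>_def cadj_outer cinner_cadj_quadratic)
  have "0 \<le> Re (cnj t * \<alpha> + t * cnj \<alpha> + t * cnj t * \<gamma>)" for t
  proof -
    have "outer (x + t *s y) (x + t *s y) = outer x x + cscale (cnj t) (outer x y)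
        + (cscale t (outer y x) + cscale (t * cnj t) (outer y y))"
      by (simp add: outer_add_left outer_add_right outer_scale_left outer_scale_right cscale_cscale
          cscale_add add.assoc mult.commute)
    then have "\<phi> (outer (x + t *s y) (x + t *s y)) = cscale (cnj t) (\<phi> (outer x y))
        + (cscale t (\<phi> (outer y x)) + cscale (t * cnj t) (\<phi> (outer y y)))"
      by (simp add: clinear_map_add[OF lin] clinear_map_cscale[OF lin] xx)
    then have "cinner w (\<phi> (outer (x + t *s y) (x + t *s y)) *v w)
        = cnj t * \<alpha> + t * cnj \<alpha> + t * cnj t * \<gamma>"
      by (simp only: matrix_vector_mult_add_rdistrib matrix_vector_mult_cscale cinner_add_right
          cinner_scale_right yx \<alpha>_def[symmetric] \<gamma>_def[symmetric] add.assoc)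
    moreover have "0 \<le> cinner w (\<phi> (outer (x + t *s y) (x + t *s y)) *v w)"
      by (rule psd_cinner_nonneg[OF positive_map_psd[OF \<phi> psd_outer]])
    ultimately show ?thesis
      by (simp add: less_eq_complex_def)
  qed
  moreover have "0 \<le> \<gamma>"
    unfolding \<gamma>_def by (rule psd_cinner_nonneg[OF positive_map_psd[OF \<phi> psd_outer]])
  ultimately show "cinner w (\<phi> (outer x y) *v w) = 0"
    unfolding \<alpha>_def[symmetric] by (rule complex_quadratic_nonneg_imp_eq_0)
qed

lemma hs_adjointD: "is_hs_adjoint \<phi> \<psi> \<Longrightarrow> hs_inner (\<psi> Y) X = hs_inner Y (\<phi> X)"
  by (simp add: is_hs_adjoint_def)

lemma hs_inner_cadj: "hs_inner (cadj A) B = cnj (hs_inner A (cadj B))"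
  by (simp add: hs_inner_def trace_cadj[symmetric] cadj_mult trace_mul_sym[of B])

lemma trace_hs_adjoint:
  assumes "is_hs_adjoint \<phi> \<psi>"
  shows "trace (\<psi> Z) = cnj (trace (cadj Z ** \<phi> (mat 1)))"
  using hs_adjointD[OF assms, of Z "mat 1"] hs_inner_conj[of "mat 1" "\<psi> Z"]
  by (simp add: hs_inner_def)

lemma cinner_hs_adjoint:
  assumes "is_hs_adjoint \<phi> \<psi>"
  shows "cinner x (\<psi> Z *v y) = cnj (hs_inner Z (\<phi> (outer x y)))"
  by (metis assms hs_adjointD hs_inner_conj hs_inner_outer)

lemma hs_adjoint_hermitian:
  assumes \<phi>: "positive_map \<phi>" and adj: "is_hs_adjoint \<phi> \<psi>" and Z: "hermitian Z"
  shows "hermitian (\<psi> Z)"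
proof (rule hs_inner_eqI)
  fix W
  have "hs_inner (cadj (\<psi> Z)) W = cnj (hs_inner Z (cadj (\<phi> W)))"
    by (simp add: hs_inner_cadj hs_adjointD[OF adj] positive_map_cadj[OF \<phi>])
  also have "\<dots> = hs_inner (\<psi> Z) W"
    using hs_inner_cadj[of Z "\<phi> W"] Z by (simp add: hs_adjointD[OF adj])
  finally show "hs_inner (cadj (\<psi> Z)) W = hs_inner (\<psi> Z) W" .
qed

lemma hs_adjoint_psd:
  assumes \<phi>: "positive_map \<phi>" and adj: "is_hs_adjoint \<phi> \<psi>" and Z: "psd Z"
  shows "psd (\<psi> Z)"
proof -
  have "0 \<le> trace (Z ** \<phi> (outer x x))" for x
    by (rule trace_psd_mult_nonneg[OF Z positive_map_psd[OF \<phi> psd_outer]])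
  then have "0 \<le> cinner x (\<psi> Z *v x)" for x
    using psd_hermitian[OF Z]
    by (simp add: cinner_hs_adjoint[OF adj] hs_inner_def less_eq_complex_def)
  then show ?thesis
    using hs_adjoint_hermitian[OF \<phi> adj psd_hermitian[OF Z]] by (simp add: psd_iff_cinner)
qed

text \<open>A vector \<open>x\<close> in the kernel has \<open>\<phi> (x x\<^sup>*) = 0\<close>, because \<open>P + \<epsilon>\<close> is bounded below,
  and hence \<open>\<phi> (x y\<^sup>*) = 0\<close> for all \<open>y\<close>.\<close>

lemma hs_adjoint_ker_subset:
  assumes \<phi>: "positive_map \<phi>" and adj: "is_hs_adjoint \<phi> \<psi>" and P: "psd P" and "\<epsilon> > 0"
  shows "ker (\<psi> (P + mat (of_real \<epsilon>))) \<subseteq> ker (cadj (\<psi> K))"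
proof
  fix x
  assume "x \<in> ker (\<psi> (P + mat (of_real \<epsilon>)))"
  define Q where "Q = \<phi> (outer x x)"
  have Q: "psd Q"
    unfolding Q_def by (rule positive_map_psd[OF \<phi> psd_outer])
  have "cnj (trace (P ** Q) + of_real \<epsilon> * trace Q) = cinner x (\<psi> (P + mat (of_real \<epsilon>)) *v x)"
    using psd_hermitian[OF P]
    by (simp add: cinner_hs_adjoint[OF adj] hs_inner_def cadj_add matrix_add_rdistrib trace_add
        mat_mult_left trace_cscale Q_def)
  also have "\<dots> = 0"
    using \<open>x \<in> ker _\<close> by (simp add: ker_def)
  finally have "trace (P ** Q) + of_real \<epsilon> * trace Q = 0"
    by (simp only: complex_cnj_zero_iff)
  moreover have "0 \<le> trace (P ** Q)"
    by (rule trace_psd_mult_nonneg[OF P Q])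
  moreover have "0 \<le> trace Q"
    using trace_psd_mult_nonneg[OF psd_mat[of 1] Q] by simp
  moreover have "0 \<le> complex_of_real \<epsilon>"
    using \<open>\<epsilon> > 0\<close> by (simp add: less_eq_complex_def)
  ultimately have "trace Q = 0"
    using \<open>\<epsilon> > 0\<close> by (simp add: add_nonneg_eq_0_iff)
  then have "\<phi> (outer x y) = 0" for y
    using positive_map_outer_eq_0[OF \<phi>] psd_trace_eq_0[OF Q] unfolding Q_def by blast
  then have "cinner (cadj (\<psi> K) *v x) (cadj (\<psi> K) *v x) = 0"
    by (simp add: cinner_cadj_right[symmetric] cinner_hs_adjoint[OF adj] hs_inner_def trace_def)
  then show "x \<in> ker (cadj (\<psi> K))"
    by (simp add: cinner_self_eq_0 ker_def)
qed

section \<open>Block matrices\<close>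

lemma sum_UNIV_Plus:
  "sum f (UNIV :: ('a::finite + 'b::finite) set) = (\<Sum>a\<in>UNIV. f (Inl a)) + (\<Sum>b\<in>UNIV. f (Inr b))"
  using sum.Plus[of "UNIV :: 'a set" "UNIV :: 'b set" f] by (simp add: comp_def)

lemma block2_nth [simp]:
  "block2 A B C D $ Inl a $ Inl b = A $ a $ b"
  "block2 A B C D $ Inl a $ Inr b = B $ a $ b"
  "block2 A B C D $ Inr a $ Inl b = C $ a $ b"
  "block2 A B C D $ Inr a $ Inr b = D $ a $ b"
  by (simp_all add: block2_def)

lemma cadj_block2: "cadj (block2 A B C D) = block2 (cadj A) (cadj C) (cadj B) (cadj D)"
proof -
  have "cadj (block2 A B C D) $ i $ j = block2 (cadj A) (cadj C) (cadj B) (cadj D) $ i $ j" for i j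
    by (cases i; cases j) (simp_all add: cadj_def)
  then show ?thesis
    by (simp add: vec_eq_iff)
qed

lemma trace_block2_mult:
  "trace (block2 A B C D ** block2 E F G H) =
     trace (A ** E) + trace (B ** G) + trace (C ** F) + trace (D ** H)"
  unfolding trace_def matrix_matrix_mult_def by (simp add: sum_UNIV_Plus sum.distrib)

definition vinl :: "complex^('m + 'm) \<Rightarrow> complex^'m" where
  "vinl w = (\<chi> i. w $ Inl i)"

definition vinr :: "complex^('m + 'm) \<Rightarrow> complex^'m" where
  "vinr w = (\<chi> i. w $ Inr i)"

lemma cinner_block2:
  "cinner w (block2 A B C D *v w) =
     cinner (vinl w) (A *v vinl w) + cinner (vinl w) (B *v vinr w)
     + cinner (vinr w) (C *v vinl w) + cinner (vinr w) (D *v vinr w)"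
  unfolding cinner_def matrix_vector_mult_def vinl_def vinr_def
  by (simp add: sum_UNIV_Plus sum.distrib distrib_left)

text \<open>Positivity of the Schur-complement block: its quadratic form at \<open>(u, v)\<close> is the value of
  the form of \<open>X\<close> at \<open>X\<^sup>+ K u - v\<close>, using \<open>K u = X X\<^sup>+ K u\<close>.\<close>

lemma psd_block2_mp_inv:
  assumes X: "psd X" and ker: "ker X \<subseteq> ker (cadj K)"
  shows "psd (block2 (cadj K ** mp_inv X ** K) (- cadj K) (- K) X)"
proof -
  have hX: "hermitian X"
    using X by (rule psd_hermitian)
  have hXp: "hermitian (mp_inv X)"
    by (rule hermitian_mp_inv(2)[OF hX])
  have X_sym: "cinner (X *v a) b = cinner a (X *v b)" for a b
    using cinner_cadj_right[of a X b] hX by simp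
  have "cinner w (block2 (cadj K ** mp_inv X ** K) (- cadj K) (- K) X *v w) = cinner z (X *v z)"
    if "z = mp_inv X *v (K *v vinl w) - vinr w" for w z
  proof -
    define r where "r = mp_inv X *v (K *v vinl w)"
    have Ku: "K *v vinl w = X *v r"
      using hermitian_mp_inv_range[OF hX ker]
      by (simp add: r_def matrix_vector_mul_assoc matrix_mul_assoc[symmetric])
    have "cinner (vinl w) ((cadj K ** mp_inv X ** K) *v vinl w) = cinner (K *v vinl w) r"
      by (simp add: r_def matrix_vector_mul_assoc[symmetric] cinner_cadj_right)
    also have "\<dots> = cinner r (X *v r)"
      by (simp add: Ku X_sym)
    finally have "cinner (vinl w) ((cadj K ** mp_inv X ** K) *v vinl w) = cinner r (X *v r)" .
    moreover have "cinner (vinl w) (- cadj K *v vinr w) = - cinner r (X *v vinr w)"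
      by (simp add: matrix_vector_mult_uminus cinner_uminus_right cinner_cadj_right Ku X_sym)
    moreover have "cinner (vinr w) (- K *v vinl w) = - cinner (vinr w) (X *v r)"
      by (simp add: matrix_vector_mult_uminus cinner_uminus_right Ku)
    ultimately show ?thesis
      using that
      by (simp add: cinner_block2 r_def[symmetric] matrix_vector_mult_diff_distrib cinner_diff_left
          cinner_diff_right)
  qed
  then have "0 \<le> cinner w (block2 (cadj K ** mp_inv X ** K) (- cadj K) (- K) X *v w)" for w
    using psd_cinner_nonneg[OF X] by metis
  moreover have "hermitian (block2 (cadj K ** mp_inv X ** K) (- cadj K) (- K) X)"
    using hX hXp by (simp add: cadj_block2 cadj_uminus cadj_mult3)
  ultimately show ?thesis
    by (simp add: psd_iff_cinner)
qed

lemma Re_trace_cadj_mult: "Re (trace (cadj A ** B)) = Re (trace (cadj B ** (A::complex^'n^'n)))"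
  using hs_inner_conj[of B A] by (simp add: hs_inner_def)

lemma trace_psd_block2_pairing:
  assumes "psd (block2 A (cadj G) G D)" and "psd (block2 Z (- cadj K) (- K) X)"
  shows "2 * Re (trace (cadj K ** G)) \<le> Re (trace (Z ** A)) + Re (trace (X ** D))"
proof -
  have "trace (block2 A (cadj G) G D ** block2 Z (- cadj K) (- K) X)
      = trace (Z ** A) - trace (cadj G ** K) - trace (cadj K ** G) + trace (X ** D)"
    by (simp add: trace_block2_mult matrix_mul_uminus_right trace_uminus trace_mul_sym[of A Z]
        trace_mul_sym[of D X] trace_mul_sym[of G "cadj K"])
  moreover have "0 \<le> Re (trace (block2 A (cadj G) G D ** block2 Z (- cadj K) (- K) X))"
    using trace_psd_mult_nonneg[OF assms] by (simp add: less_eq_complex_def)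
  ultimately show ?thesis
    using Re_trace_cadj_mult[of G K] by simp
qed

lemma trace_completing_square:
  assumes C: "psd C" and ker: "ker C \<subseteq> ker (cadj B)"
  shows "2 * Re (trace (cadj W ** B)) - Re (trace (cadj W ** C ** W))
    \<le> Re (trace (cadj B ** mp_inv C ** B))"
proof -
  define Cp where "Cp = mp_inv C"
  have hC: "hermitian C"
    using C by (rule psd_hermitian)
  have hCp: "hermitian Cp" and CpCCp: "Cp ** C ** Cp = Cp"
    using hermitian_mp_inv[OF hC] by (simp_all add: Cp_def penrose_def)
  have CCpB: "C ** Cp ** B = B"
    unfolding Cp_def by (rule hermitian_mp_inv_range[OF hC ker])
  define E where "E = W - Cp ** B"
  have "cadj W ** C ** (Cp ** B) = cadj W ** B"
    by (metis CCpB matrix_mul_assoc)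
  moreover have "cadj B ** Cp ** C ** (Cp ** B) = cadj B ** Cp ** B"
    by (metis CpCCp matrix_mul_assoc)
  moreover have "cadj B ** Cp ** C ** W = cadj (cadj W ** B)"
    using CCpB hC hCp by (metis cadj_cadj cadj_mult cadj_mult3)
  ultimately have "cadj E ** C ** E
      = cadj W ** C ** W - cadj (cadj W ** B) - (cadj W ** B - cadj B ** Cp ** B)"
    by (simp only: E_def cadj_diff cadj_mult hCp matrix_diff_ldistrib matrix_diff_rdistrib)
  moreover have "0 \<le> Re (trace (cadj E ** C ** E))"
    using trace_psd_sandwich_nonneg[OF C, of E] by (simp add: less_eq_complex_def)
  ultimately show ?thesis
    by (simp add: trace_sub trace_cadj Cp_def)
qed

section \<open>From the Schwarz inequality to the trace inequality\<close>

lemma trace_hs_adjoint_sandwich: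
  assumes \<phi>: "positive_map \<phi>" and adj: "is_hs_adjoint \<phi> \<psi>" and X: "hermitian X"
  shows "trace (cadj W ** \<psi> X ** W) = trace (X ** \<phi> (W ** cadj W))"
proof -
  have "trace (cadj W ** \<psi> X ** W) = hs_inner (\<psi> X) (W ** cadj W)"
    using hs_adjoint_hermitian[OF \<phi> adj X] trace_mul_sym[of "W ** cadj W" "\<psi> X"]
    by (simp add: hs_inner_def trace_mul_sym[of "cadj W ** \<psi> X" W] matrix_mul_assoc)
  also have "\<dots> = trace (X ** \<phi> (W ** cadj W))"
    using X hs_adjointD[OF adj, of X "W ** cadj W"] by (simp add: hs_inner_def)
  finally show ?thesis .
qed

lemma gen_schwarz_imp_trace_ineq:
  assumes \<phi>: "positive_map \<phi>" and adj: "is_hs_adjoint \<phi> \<psi>" and gs: "gen_schwarz \<phi>"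
    and X: "psd X" and ker: "ker X \<subseteq> ker (cadj K)"
  shows "trace (cadj (\<psi> K) ** mp_inv (\<psi> X) ** \<psi> K) \<le> trace (\<psi> (cadj K ** mp_inv X ** K))"
proof -
  define Cp where "Cp = mp_inv (\<psi> X)"
  define Y where "Y = Cp ** \<psi> K"
  define Z where "Z = cadj K ** mp_inv X ** K"
  define T where "T = trace (cadj (\<psi> K) ** Cp ** \<psi> K)"
  have hX: "hermitian X"
    using X by (rule psd_hermitian)
  have hCp: "hermitian Cp" and CpCCp: "Cp ** \<psi> X ** Cp = Cp"
    using hermitian_mp_inv[OF hs_adjoint_hermitian[OF \<phi> adj hX]] by (simp_all add: Cp_def penrose_def)
  have hZ: "hermitian Z"
    using hermitian_mp_inv(2)[OF hX] by (simp add: Z_def cadj_mult3)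
  have "psd (block2 (\<phi> (mat 1)) (\<phi> (cadj Y)) (cadj (\<phi> (cadj Y))) (\<phi> (cadj (cadj Y) ** cadj Y)))"
    using gs by (simp only: gen_schwarz_def)
  then have "psd (block2 (\<phi> (mat 1)) (cadj (\<phi> Y)) (\<phi> Y) (\<phi> (Y ** cadj Y)))"
    by (simp add: positive_map_cadj[OF \<phi>])
  then have "2 * Re (trace (cadj K ** \<phi> Y))
      \<le> Re (trace (Z ** \<phi> (mat 1))) + Re (trace (X ** \<phi> (Y ** cadj Y)))"
    using psd_block2_mp_inv[OF X ker] unfolding Z_def by (rule trace_psd_block2_pairing)
  moreover have "trace (cadj K ** \<phi> Y) = T"
    using hs_adjointD[OF adj, of K Y] by (simp add: hs_inner_def T_def Y_def matrix_mul_assoc)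
  moreover have "trace (X ** \<phi> (Y ** cadj Y)) = T"
  proof -
    have "cadj Y ** \<psi> X ** Y = cadj (\<psi> K) ** Cp ** \<psi> K"
      unfolding Y_def cadj_mult hCp by (metis CpCCp matrix_mul_assoc)
    then show ?thesis
      using trace_hs_adjoint_sandwich[OF \<phi> adj hX, of Y] by (simp add: T_def)
  qed
  moreover have "trace (\<psi> Z) = cnj (trace (Z ** \<phi> (mat 1)))"
    using trace_hs_adjoint[OF adj, of Z] hZ by simp
  moreover have "Im (trace (\<psi> Z)) = 0"
    by (rule trace_hermitian_real[OF hs_adjoint_hermitian[OF \<phi> adj hZ]])
  moreover have "Im T = 0"
    unfolding T_def using hCp by (intro trace_hermitian_real) (simp add: cadj_mult3)
  ultimately show ?thesis
    by (simp add: less_eq_complex_def T_def Cp_def Z_def)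
qed

section \<open>From the trace inequality to the Schwarz inequality\<close>

lemma mp_inv_eq_inverse:
  fixes A B :: "complex^'n^'n"
  assumes "A ** B = mat 1"
  shows "mp_inv A = B"
proof (rule mp_inv_eqI)
  have "B ** A = mat 1"
    using assms by (rule matrix_left_right_inverse1)
  then show "penrose A B"
    using assms by (simp add: penrose_def matrix_mul_assoc[symmetric])
qed

lemma cinner_sherman_morrison:
  assumes "e \<noteq> 0" and "e + cinner v v \<noteq> 0"
  shows "cinner v (cscale (1 / e) (mat 1 - cscale (1 / (e + cinner v v)) (outer v v)) *v x)
    = cinner v x / (e + cinner v v)"
proof -
  have "cinner v (cscale (1 / e) (mat 1 - cscale (1 / (e + cinner v v)) (outer v v)) *v x)
      = cinner v x / e - cinner v x * cinner v v / (e * (e + cinner v v))"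
    by (simp add: matrix_vector_mult_cscale matrix_vector_mult_diff_rdistrib outer_mult_vec
        cinner_scale_right cinner_diff_right)
  also have "\<dots> = cinner v x / (e + cinner v v)"
    using assms by (simp add: divide_simps) (simp add: algebra_simps)
  finally show ?thesis .
qed

lemma of_real_plus_cinner_self_nonzero: "\<epsilon> > 0 \<Longrightarrow> of_real \<epsilon> + cinner v v \<noteq> 0"
  using cinner_self_nonneg[of v] by (auto simp: less_eq_complex_def complex_eq_iff)

lemma mp_inv_outer_plus_mat:
  assumes "\<epsilon> > 0"
  shows "mp_inv (outer v v + mat (of_real \<epsilon>))
    = cscale (1 / of_real \<epsilon>) (mat 1 - cscale (1 / (of_real \<epsilon> + cinner v v)) (outer v v))"
    (is "_ = ?Xi")
proof (rule mp_inv_eq_inverse)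
  have "(outer v v + mat (of_real \<epsilon>)) *v (?Xi *v x) = x" for x
  proof -
    have Xi: "?Xi *v x = (1 / of_real \<epsilon>) *s (x - (cinner v x / (of_real \<epsilon> + cinner v v)) *s v)"
      by (simp add: matrix_vector_mult_cscale matrix_vector_mult_diff_rdistrib outer_mult_vec)
    have "cinner v (?Xi *v x) = cinner v x / (of_real \<epsilon> + cinner v v)"
      using assms of_real_plus_cinner_self_nonzero[OF assms] by (intro cinner_sherman_morrison) auto
    then have "(outer v v + mat (of_real \<epsilon>)) *v (?Xi *v x)
        = (cinner v x / (of_real \<epsilon> + cinner v v)) *s v + of_real \<epsilon> *s (?Xi *v x)"
      by (simp only: matrix_vector_mult_add_rdistrib outer_mult_vec matrix_vector_mult_mat)
    also have "\<dots> = x"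
      using assms by (simp only: Xi vector_smult_assoc) (simp add: vector_ssub_ldistrib)
    finally show ?thesis .
  qed
  then show "(outer v v + mat (of_real \<epsilon>)) ** ?Xi = mat 1"
    by (simp add: matrix_eq matrix_vector_mul_assoc[symmetric])
qed

lemma ker_psd_plus_mat:
  assumes P: "psd P" and "\<epsilon> > 0"
  shows "ker (P + mat (of_real \<epsilon>)) = {0}"
proof -
  have "x = 0" if "(P + mat (of_real \<epsilon>)) *v x = 0" for x
  proof -
    have "cinner x (P *v x) + of_real \<epsilon> * cinner x x = 0"
      using that by (metis cinner_zero_right cinner_add_right cinner_scale_right
          matrix_vector_mult_add_rdistrib matrix_vector_mult_mat)
    moreover have "0 \<le> of_real \<epsilon> * cinner x x"
      using assms(2) cinner_self_nonneg[of x]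
      by (intro mult_nonneg_nonneg) (simp_all add: less_eq_complex_def)
    ultimately have "of_real \<epsilon> * cinner x x = 0"
      using psd_cinner_nonneg[OF P] by (simp add: add_nonneg_eq_0_iff)
    then show "x = 0"
      using assms(2) by (simp add: cinner_self_eq_0)
  qed
  then show ?thesis
    by (auto simp: ker_def)
qed

lemma trace_mult_hs_adjoint_outer:
  assumes \<phi>: "positive_map \<phi>" and adj: "is_hs_adjoint \<phi> \<psi>"
  shows "trace (K ** \<psi> (outer v u)) = cinner u (\<phi> K *v v)"
proof -
  have "trace (K ** \<psi> (outer v u)) = hs_inner (cadj K) (\<psi> (outer v u))"
    by (simp add: hs_inner_def)
  also have "\<dots> = cnj (hs_inner (outer v u) (\<phi> (cadj K)))"
    by (simp add: hs_inner_conj[of "cadj K"] hs_adjointD[OF adj])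
  also have "\<dots> = cinner u (\<phi> K *v v)"
    by (simp add: hs_inner_outer positive_map_cadj[OF \<phi>] cinner_cadj_right cinner_commute[of _ u])
  finally show ?thesis .
qed

lemma Re_trace_hs_adjoint_outer_sandwich:
  assumes \<phi>: "positive_map \<phi>" and adj: "is_hs_adjoint \<phi> \<psi>" and "\<epsilon> > 0"
  shows "Re (trace (\<psi> (cadj (outer v u) ** mp_inv (outer v v + mat (of_real \<epsilon>)) ** outer v u)))
    = Re (cinner v v) / (Re (cinner v v) + \<epsilon>) * Re (cinner u (\<phi> (mat 1) *v u))"
proof -
  define N where "N = Re (cinner v v)"
  have "cinner v v = of_real N"
    using cinner_self_nonneg[of v] by (simp add: N_def less_eq_complex_def complex_eq_iff)
  moreover have "cinner v (mp_inv (outer v v + mat (of_real \<epsilon>)) *v v)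
      = cinner v v / (of_real \<epsilon> + cinner v v)"
    unfolding mp_inv_outer_plus_mat[OF \<open>\<epsilon> > 0\<close>]
    using \<open>\<epsilon> > 0\<close> of_real_plus_cinner_self_nonzero[OF \<open>\<epsilon> > 0\<close>]
    by (intro cinner_sherman_morrison) auto
  ultimately have "cadj (outer v u) ** mp_inv (outer v v + mat (of_real \<epsilon>)) ** outer v u
      = cscale (of_real (N / (N + \<epsilon>))) (outer u u)"
    by (simp add: cadj_outer outer_sandwich add.commute)
  moreover have "Im (cinner u (\<phi> (mat 1) *v u)) = 0"
    using positive_map_hermitian[OF \<phi>] by (simp add: hermitian_cinner_real)
  ultimately show ?thesis
    by (simp add: trace_hs_adjoint[OF adj] cadj_cscale cadj_outer cscale_mult_left trace_cscale
        trace_outer_mult N_def)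
qed

lemma trace_ineq_imp_block_form_bound:
  assumes \<phi>: "positive_map \<phi>" and adj: "is_hs_adjoint \<phi> \<psi>"
    and R: "\<And>K X. psd X \<Longrightarrow> ker X \<subseteq> ker (cadj K) \<Longrightarrow>
      trace (cadj (\<psi> K) ** mp_inv (\<psi> X) ** \<psi> K) \<le> trace (\<psi> (cadj K ** mp_inv X ** K))"
    and "\<epsilon> > 0"
  shows "- 2 * Re (cinner u (\<phi> K *v v)) - Re (cinner v (\<phi> (cadj K ** K) *v v))
      - \<epsilon> * Re (trace (\<phi> (cadj K ** K)))
    \<le> Re (cinner v v) / (Re (cinner v v) + \<epsilon>) * Re (cinner u (\<phi> (mat 1) *v u))"
proof -
  define X where "X = outer v v + mat (of_real \<epsilon>)"
  define B where "B = \<psi> (outer v u)"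
  define T where "T = Re (trace (cadj B ** mp_inv (\<psi> X) ** B))"
  have X: "psd X"
    unfolding X_def using \<open>\<epsilon> > 0\<close> by (intro psd_add psd_outer psd_mat) simp
  have "ker X = {0}"
    unfolding X_def by (rule ker_psd_plus_mat[OF psd_outer \<open>\<epsilon> > 0\<close>])
  then have "ker X \<subseteq> ker (cadj (outer v u))"
    by (simp add: ker_def)
  then have "T \<le> Re (trace (\<psi> (cadj (outer v u) ** mp_inv X ** outer v u)))"
    using R[OF X] by (simp add: T_def B_def less_eq_complex_def)
  also have "\<dots> = Re (cinner v v) / (Re (cinner v v) + \<epsilon>) * Re (cinner u (\<phi> (mat 1) *v u))"
    unfolding X_def by (rule Re_trace_hs_adjoint_outer_sandwich[OF \<phi> adj \<open>\<epsilon> > 0\<close>])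
  finally have upper: "T \<le> Re (cinner v v) / (Re (cinner v v) + \<epsilon>) * Re (cinner u (\<phi> (mat 1) *v u))" .
  have "2 * Re (trace (cadj (- cadj K) ** B)) - Re (trace (cadj (- cadj K) ** \<psi> X ** (- cadj K))) \<le> T"
    unfolding T_def B_def using hs_adjoint_ker_subset[OF \<phi> adj psd_outer \<open>\<epsilon> > 0\<close>]
    by (intro trace_completing_square hs_adjoint_psd[OF \<phi> adj X]) (simp add: X_def)
  moreover have "trace (cadj (- cadj K) ** B) = - cinner u (\<phi> K *v v)"
    by (simp add: B_def cadj_uminus matrix_mul_uminus_left trace_uminus
        trace_mult_hs_adjoint_outer[OF \<phi> adj])
  moreover have "trace (cadj (- cadj K) ** \<psi> X ** (- cadj K)) = trace (X ** \<phi> (cadj K ** K))"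
    using trace_hs_adjoint_sandwich[OF \<phi> adj psd_hermitian[OF X], of "- cadj K"]
    by (simp add: cadj_uminus matrix_mul_uminus_left matrix_mul_uminus_right)
  moreover have "trace (X ** \<phi> (cadj K ** K))
      = cinner v (\<phi> (cadj K ** K) *v v) + of_real \<epsilon> * trace (\<phi> (cadj K ** K))"
    by (simp add: X_def matrix_add_rdistrib trace_add trace_outer_mult mat_mult_left trace_cscale)
  ultimately show ?thesis
    using upper by simp
qed

lemma nonneg_at_0_if_nonneg_at_right:
  fixes f :: "real \<Rightarrow> real"
  assumes "continuous (at_right 0) f" and "\<And>\<epsilon>. \<epsilon> > 0 \<Longrightarrow> 0 \<le> f \<epsilon>"
  shows "0 \<le> f 0"
proof (rule tendsto_lowerbound)
  show "(f \<longlongrightarrow> f 0) (at_right 0)"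
    using assms(1) by (simp add: continuous_within)
  show "\<forall>\<^sub>F \<epsilon> in at_right 0. 0 \<le> f \<epsilon>"
    using eventually_at_right_less[of "0::real"] by eventually_elim (rule assms(2))
qed simp

lemma psd_block2I:
  assumes A: "psd A" and D: "psd D"
    and form: "\<And>u v. 0 \<le> Re (cinner u (A *v u)) + 2 * Re (cinner u (F *v v)) + Re (cinner v (D *v v))"
  shows "psd (block2 A F (cadj F) D)"
proof -
  have "cinner w (block2 A F (cadj F) D *v w)
      = cinner (vinl w) (A *v vinl w)
        + (cinner (vinl w) (F *v vinr w) + cnj (cinner (vinl w) (F *v vinr w)))
        + cinner (vinr w) (D *v vinr w)" for w
  proof -
    have "cinner (vinr w) (cadj F *v vinl w) = cnj (cinner (vinl w) (F *v vinr w))"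
      using cinner_cadj_right[of "vinr w" "cadj F" "vinl w"]
        cinner_commute[of "F *v vinr w" "vinl w"] by simp
    then show ?thesis
      by (simp add: cinner_block2 add.assoc)
  qed
  moreover have "Im (cinner x (A *v x)) = 0" "Im (cinner x (D *v x)) = 0" for x
    using A D by (simp_all add: psd_hermitian hermitian_cinner_real)
  ultimately have "0 \<le> cinner w (block2 A F (cadj F) D *v w)" for w
    using form by (simp add: less_eq_complex_def)
  moreover have "hermitian (block2 A F (cadj F) D)"
    using A D by (simp add: cadj_block2 psd_hermitian)
  ultimately show ?thesis
    by (simp add: psd_iff_cinner)
qed

lemma trace_ineq_imp_block_form_nonneg:
  assumes \<phi>: "positive_map \<phi>" and adj: "is_hs_adjoint \<phi> \<psi>"
    and R: "\<And>K X. psd X \<Longrightarrow> ker X \<subseteq> ker (cadj K) \<Longrightarrow>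
      trace (cadj (\<psi> K) ** mp_inv (\<psi> X) ** \<psi> K) \<le> trace (\<psi> (cadj K ** mp_inv X ** K))"
  shows "0 \<le> Re (cinner u (\<phi> (mat 1) *v u)) + 2 * Re (cinner u (\<phi> K *v v))
    + Re (cinner v (\<phi> (cadj K ** K) *v v))"
proof (cases "v = 0")
  case True
  then show ?thesis
    using psd_cinner_nonneg[OF positive_map_psd[OF \<phi> psd_mat[of 1]], of u]
    by (simp add: less_eq_complex_def)
next
  case False
  define N where "N = Re (cinner v v)"
  have "N > 0"
    using False cinner_self_nonneg[of v] cinner_self_eq_0[of v]
    by (auto simp: N_def less_eq_complex_def complex_eq_iff)
  let ?f = "\<lambda>\<epsilon>. N / (N + \<epsilon>) * Re (cinner u (\<phi> (mat 1) *v u)) + 2 * Re (cinner u (\<phi> K *v v))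
    + Re (cinner v (\<phi> (cadj K ** K) *v v)) + \<epsilon> * Re (trace (\<phi> (cadj K ** K)))"
  have "0 \<le> ?f 0"
  proof (rule nonneg_at_0_if_nonneg_at_right)
    show "continuous (at_right 0) ?f"
      using \<open>N > 0\<close> by (intro continuous_intros) auto
    show "0 \<le> ?f \<epsilon>" if "\<epsilon> > 0" for \<epsilon>
      using trace_ineq_imp_block_form_bound[OF \<phi> adj R that, of u K v] by (simp add: N_def)
  qed
  then show ?thesis
    using \<open>N > 0\<close> by simp
qed

theorem theorem1p3:
  fixes \<phi> :: "complex^'n^'n \<Rightarrow> complex^'m^'m"
    and \<psi> :: "complex^'m^'m \<Rightarrow> complex^'n^'n"
  assumes "positive_map \<phi>"
    and "is_hs_adjoint \<phi> \<psi>"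
  shows "gen_schwarz \<phi> \<longleftrightarrow>
    (\<forall>(K::complex^'m^'m) (X::complex^'m^'m). psd X \<and> ker X \<subseteq> ker (cadj K) \<longrightarrow>
       trace (\<psi> (cadj K ** mp_inv X ** K)) \<ge> trace (cadj (\<psi> K) ** mp_inv (\<psi> X) ** \<psi> K))"
proof
  assume "gen_schwarz \<phi>"
  then show "\<forall>K X. psd X \<and> ker X \<subseteq> ker (cadj K) \<longrightarrow>
      trace (\<psi> (cadj K ** mp_inv X ** K)) \<ge> trace (cadj (\<psi> K) ** mp_inv (\<psi> X) ** \<psi> K)"
    using gen_schwarz_imp_trace_ineq[OF assms] by blast
next
  assume "\<forall>K X. psd X \<and> ker X \<subseteq> ker (cadj K) \<longrightarrow>
      trace (\<psi> (cadj K ** mp_inv X ** K)) \<ge> trace (cadj (\<psi> K) ** mp_inv (\<psi> X) ** \<psi> K)"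
  then have "psd (block2 (\<phi> (mat 1)) (\<phi> K) (cadj (\<phi> K)) (\<phi> (cadj K ** K)))" for K
    using positive_map_psd[OF assms(1)] psd_mat[of 1] psd_cadj_mult
      trace_ineq_imp_block_form_nonneg[OF assms] by (intro psd_block2I) auto
  then show "gen_schwarz \<phi>"
    using positive_map_clinear[OF assms(1)] by (simp add: gen_schwarz_def)
qed

end
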